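(* $(M_0,\mathrm{id})$ with the path metric is an initial object in $\mathsf{SquaMS}$.
   Context: Let $M_0=\{(r,s)\in[0,1]^2: r\in\{0,1\}\text{ or } s\in\{0,1\}\}$ be the boundary of the unit square. Its path metric: two points on the same side have distance equal to their distance in $[0,1]$; points on adjacent sides sharing a corner $c$ have distance $d(x,c)+d(c,y)$; points on opposite sides have distance $\min(d(x,c_1)+1+d(c_2,y))$ over the two remaining sides with endpoints $c_1$ on the side of $x$ and $c_2$ on the side of $y$. A square metric space is a pair $(X,S_X)$ with $X$ a metric space with all distances at most $2$ and $S_X\colon M_0\to X$ injective such that (sq1) for $i\in\{0,1\}$, $r,s\in[0,1]$: $d_X(S_X(i,r),S_X(i,s))=|s-r|$ and $d_X(S_X(r,i),S_X(s,i))=|s-r|$; (sq2) $d_X(S_X(r,s),S_X(t,u))\ge|r-t|+|s-u|$. $\mathsf{SquaMS}$ has these as objects and short maps $f\colon X\to Y$ with $f\circ S_X=S_Y$ as morphisms. *)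

theory Defs
  imports "HOL-Analysis.Analysis"
begin

definition M0 :: "(real \<times> real) set" where
  "M0 = {(r, s). r \<in> {0..1} \<and> s \<in> {0..1} \<and> (r \<in> {0, 1} \<or> s \<in> {0, 1})}"

text \<open>The path metric on M0, following the case distinction of the paper:
  same side; adjacent sides through a common corner; opposite sides
  (minimum over the two routes). Set to 0 outside M0 (irrelevant junk value).\<close>
definition sq_path_dist :: "real \<times> real \<Rightarrow> real \<times> real \<Rightarrow> real" where
  "sq_path_dist p q =
    (if p \<in> M0 \<and> q \<in> M0 then
      (let r = fst p; s = snd p; t = fst q; u = snd q in
       if (r = 0 \<and> t = 0) \<or> (r = 1 \<and> t = 1) then \<bar>s - u\<bar>
       else if (s = 0 \<and> u = 0) \<or> (s = 1 \<and> u = 1) then \<bar>r - t\<bar>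
       else if r \<in> {0, 1} \<and> u \<in> {0, 1} then \<bar>s - u\<bar> + \<bar>r - t\<bar>
       else if s \<in> {0, 1} \<and> t \<in> {0, 1} then \<bar>r - t\<bar> + \<bar>s - u\<bar>
       else if r \<in> {0, 1} \<and> t \<in> {0, 1} then min (s + 1 + u) ((1 - s) + 1 + (1 - u))
       else min (r + 1 + t) ((1 - r) + 1 + (1 - t)))
     else 0)"

definition square_metric_space ::
    "'a set \<Rightarrow> ('a \<Rightarrow> 'a \<Rightarrow> real) \<Rightarrow> (real \<times> real \<Rightarrow> 'a) \<Rightarrow> bool" where
  "square_metric_space X d S \<longleftrightarrow>
     Metric_space X d \<and>
     (\<forall>x\<in>X. \<forall>y\<in>X. d x y \<le> 2) \<and>
     S ` M0 \<subseteq> X \<and> inj_on S M0 \<and>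
     (\<forall>i\<in>{0, 1}. \<forall>r\<in>{0..1}. \<forall>s\<in>{0..1}.
        d (S (i, r)) (S (i, s)) = \<bar>s - r\<bar> \<and> d (S (r, i)) (S (s, i)) = \<bar>s - r\<bar>) \<and>
     (\<forall>p\<in>M0. \<forall>q\<in>M0. d (S p) (S q) \<ge> \<bar>fst p - fst q\<bar> + \<bar>snd p - snd q\<bar>)"

definition squams_morphism ::
    "'a set \<Rightarrow> ('a \<Rightarrow> 'a \<Rightarrow> real) \<Rightarrow> (real \<times> real \<Rightarrow> 'a) \<Rightarrow>
     'b set \<Rightarrow> ('b \<Rightarrow> 'b \<Rightarrow> real) \<Rightarrow> (real \<times> real \<Rightarrow> 'b) \<Rightarrow> ('a \<Rightarrow> 'b) \<Rightarrow> bool" where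
  "squams_morphism X dX SX Y dY SY f \<longleftrightarrow>
     f ` X \<subseteq> Y \<and>
     (\<forall>x\<in>X. \<forall>y\<in>X. dY (f x) (f y) \<le> dX x y) \<and>
     (\<forall>p\<in>M0. f (SX p) = SY p)"

end

theory Submission
  imports Defs
begin

text \<open>Unrolling the boundary by arc length gives a bijection \<open>boundary_path\<close> from
  \<open>[0,4)\<close> onto \<open>M0\<close> that carries the path metric to the intrinsic metric of a circle of
  length 4. In any square metric space, (sq1) makes \<open>S \<circ> boundary_path\<close> isometric on each
  unit interval, so chaining triangle inequalities makes it 1-Lipschitz on \<open>[0,4]\<close>. As
  \<open>boundary_path 4 = boundary_path 0\<close>, this bounds \<open>d (S p) (S q)\<close> by the lengths of both
  arcs from \<open>p\<close> to \<open>q\<close>, i.e. by their path distance. So \<open>S\<close> itself is a short map out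
  of \<open>M0\<close>, and it is the only morphism because morphisms must agree with \<open>S\<close> on \<open>M0\<close>.\<close>

lemma Metric_space_dist_le_from_unit_intervals:
  assumes ms: "Metric_space X d" and into: "f ` {a..b} \<subseteq> X"
    and unit_steps: "\<And>(k::int) x y. x \<in> {a..b} \<Longrightarrow> y \<in> {a..b} \<Longrightarrow>
        x \<in> {of_int k..of_int k + 1} \<Longrightarrow> y \<in> {of_int k..of_int k + 1} \<Longrightarrow>
        d (f x) (f y) \<le> \<bar>x - y\<bar>"
    and xy: "x \<in> {a..b}" "y \<in> {a..b}"
  shows "d (f x) (f y) \<le> \<bar>x - y\<bar>"
proof -
  have ordered: "d (f x) (f y) \<le> y - x"
    if "x \<le> y" "x \<in> {a..b}" "y \<in> {a..b}" "nat (\<lfloor>y\<rfloor> - \<lfloor>x\<rfloor>) = n" for n x y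
    using that
  proof (induction n arbitrary: x)
    case 0
    then have "x \<in> {of_int \<lfloor>x\<rfloor>..of_int \<lfloor>x\<rfloor> + 1}" "y \<in> {of_int \<lfloor>x\<rfloor>..of_int \<lfloor>x\<rfloor> + 1}"
      by auto linarith+
    with unit_steps[OF "0.prems"(2,3)] "0.prems"(1) show ?case by fastforce
  next
    case (Suc n)
    define z :: real where "z = of_int \<lfloor>x\<rfloor> + 1"
    have "x \<le> z" "z \<le> y" "\<lfloor>z\<rfloor> = \<lfloor>x\<rfloor> + 1"
      using Suc.prems unfolding z_def by (auto, linarith+)
    then have z: "z \<in> {a..b}" "nat (\<lfloor>y\<rfloor> - \<lfloor>z\<rfloor>) = n"
      using Suc.prems by auto
    have "x \<in> {of_int \<lfloor>x\<rfloor>..of_int \<lfloor>x\<rfloor> + 1}" "z \<in> {of_int \<lfloor>x\<rfloor>..of_int \<lfloor>x\<rfloor> + 1}"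
      unfolding z_def by auto
    then have "d (f x) (f z) \<le> z - x"
      using unit_steps[OF Suc.prems(2) z(1)] \<open>x \<le> z\<close> by fastforce
    moreover have "d (f z) (f y) \<le> y - z"
      using Suc.IH[OF \<open>z \<le> y\<close> z(1) Suc.prems(3) z(2)] .
    moreover have "d (f x) (f y) \<le> d (f x) (f z) + d (f z) (f y)"
      using Metric_space.triangle[OF ms] into Suc.prems(2,3) z(1) by blast
    ultimately show ?case by linarith
  qed
  show ?thesis
  proof (cases "x \<le> y")
    case True
    then show ?thesis using ordered[OF True xy refl] by linarith
  next
    case False
    have "d (f x) (f y) = d (f y) (f x)"
      using Metric_space.commute[OF ms] into xy by blast
    then show ?thesis using ordered[of y x, OF _ xy(2,1) refl] False by linarith
  qed
qed

definition boundary_path :: "real \<Rightarrow> real \<times> real" where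
  "boundary_path t =
    (if t \<le> 1 then (t, 0) else if t \<le> 2 then (1, t - 1)
     else if t \<le> 3 then (3 - t, 1) else (0, 4 - t))"

definition circle_dist :: "real \<Rightarrow> real \<Rightarrow> real" where
  "circle_dist a b = min \<bar>a - b\<bar> (4 - \<bar>a - b\<bar>)"

lemma boundary_path_4_eq_0: "boundary_path 4 = boundary_path 0"
  by (simp add: boundary_path_def)

lemma boundary_path_sides:
  "t \<in> {0..1} \<Longrightarrow> boundary_path t = (t, 0)"
  "t \<in> {1..2} \<Longrightarrow> boundary_path t = (1, t - 1)"
  "t \<in> {2..3} \<Longrightarrow> boundary_path t = (3 - t, 1)"
  "t \<in> {3..4} \<Longrightarrow> boundary_path t = (0, 4 - t)"
  by (auto simp: boundary_path_def)

lemma boundary_path_in_M0: "t \<in> {0..4} \<Longrightarrow> boundary_path t \<in> M0"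
  by (auto simp: boundary_path_def M0_def)

lemma bij_betw_boundary_path: "bij_betw boundary_path {0..<4} M0"
proof (rule bij_betw_imageI)
  show "inj_on boundary_path {0..<4}"
    by (auto simp: inj_on_def boundary_path_def split: if_splits)
  show "boundary_path ` {0..<4} = M0"
  proof
    show "boundary_path ` {0..<4} \<subseteq> M0"
      using boundary_path_in_M0 by auto
  next
    show "M0 \<subseteq> boundary_path ` {0..<4}"
    proof
      fix p assume "p \<in> M0"
      then consider r where "p = (r, 0)" "0 \<le> r" "r \<le> 1"
        | s where "p = (1, s)" "0 \<le> s" "s \<le> 1"
        | r where "p = (r, 1)" "0 \<le> r" "r \<le> 1"
        | s where "p = (0, s)" "0 < s" "s \<le> 1"
        unfolding M0_def by (cases p) force
      then show "p \<in> boundary_path ` {0..<4}"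
      proof cases
        case (1 r)
        then show ?thesis by (intro image_eqI[of _ _ r]) (auto simp: boundary_path_def)
      next
        case (2 s)
        then show ?thesis by (intro image_eqI[of _ _ "1 + s"]) (auto simp: boundary_path_def)
      next
        case (3 r)
        then show ?thesis by (intro image_eqI[of _ _ "3 - r"]) (auto simp: boundary_path_def)
      next
        case (4 s)
        then show ?thesis by (intro image_eqI[of _ _ "4 - s"]) (auto simp: boundary_path_def)
      qed
    qed
  qed
qed

lemma M0_eq_image_boundary_path: "M0 = boundary_path ` {0..<4}"
  using bij_betw_boundary_path by (simp add: bij_betw_def)

lemma sq_path_dist_boundary_path:
  assumes "a \<in> {0..<4}" "b \<in> {0..<4}"
  shows "sq_path_dist (boundary_path a) (boundary_path b) = circle_dist a b"
  using assms boundary_path_in_M0[of a] boundary_path_in_M0[of b]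
  by (auto simp: sq_path_dist_def boundary_path_def circle_dist_def Let_def)

lemma Metric_space_M0: "Metric_space M0 sq_path_dist"
proof
  fix p q show "0 \<le> sq_path_dist p q"
  proof (cases "p \<in> M0 \<and> q \<in> M0")
    case True
    then obtain a b where "a \<in> {0..<4}" "b \<in> {0..<4}" "p = boundary_path a" "q = boundary_path b"
      unfolding M0_eq_image_boundary_path by blast
    then show ?thesis by (simp add: sq_path_dist_boundary_path circle_dist_def abs_le_iff)
  qed (auto simp add: sq_path_dist_def)
next
  fix p q show "sq_path_dist p q = sq_path_dist q p"
  proof (cases "p \<in> M0 \<and> q \<in> M0")
    case True
    then obtain a b where "a \<in> {0..<4}" "b \<in> {0..<4}" "p = boundary_path a" "q = boundary_path b"
      unfolding M0_eq_image_boundary_path by blast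
    then show ?thesis by (simp add: sq_path_dist_boundary_path circle_dist_def abs_minus_commute)
  qed (auto simp add: sq_path_dist_def)
next
  fix p q assume "p \<in> M0" "q \<in> M0"
  then obtain a b where ab: "a \<in> {0..<4}" "b \<in> {0..<4}" "p = boundary_path a" "q = boundary_path b"
    unfolding M0_eq_image_boundary_path by blast
  have "p = q \<longleftrightarrow> a = b"
    using ab bij_betw_boundary_path by (auto simp: bij_betw_def inj_on_def)
  with ab show "sq_path_dist p q = 0 \<longleftrightarrow> p = q"
    by (auto simp: sq_path_dist_boundary_path circle_dist_def)
next
  fix p q r assume "p \<in> M0" "q \<in> M0" "r \<in> M0"
  then obtain a b c where "a \<in> {0..<4}" "b \<in> {0..<4}" "c \<in> {0..<4}"
    "p = boundary_path a" "q = boundary_path b" "r = boundary_path c"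
    unfolding M0_eq_image_boundary_path by blast
  then show "sq_path_dist p r \<le> sq_path_dist p q + sq_path_dist q r"
    by (simp add: sq_path_dist_boundary_path circle_dist_def) arith
qed

lemma square_metric_space_M0: "square_metric_space M0 sq_path_dist id"
  unfolding square_metric_space_def
proof (intro conjI ballI)
  show "Metric_space M0 sq_path_dist" by (rule Metric_space_M0)
next
  fix p q assume "p \<in> M0" "q \<in> M0"
  then obtain a b where "a \<in> {0..<4}" "b \<in> {0..<4}" "p = boundary_path a" "q = boundary_path b"
    unfolding M0_eq_image_boundary_path by blast
  then show "sq_path_dist p q \<le> 2"
    by (simp add: sq_path_dist_boundary_path circle_dist_def)
next
  fix i r s :: real assume "i \<in> {0, 1}" "r \<in> {0..1}" "s \<in> {0..1}"
  then show "sq_path_dist (id (i, r)) (id (i, s)) = \<bar>s - r\<bar>"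
    and "sq_path_dist (id (r, i)) (id (s, i)) = \<bar>s - r\<bar>"
    by (auto simp: sq_path_dist_def M0_def Let_def)
next
  fix p q assume "p \<in> M0" "q \<in> M0"
  then show "\<bar>fst p - fst q\<bar> + \<bar>snd p - snd q\<bar> \<le> sq_path_dist (id p) (id q)"
    by (auto simp: sq_path_dist_def M0_def Let_def; linarith)
qed auto

lemma square_metric_space_dist_along_side:
  fixes k :: int
  assumes sms: "square_metric_space X d S" and k: "k \<in> {0..3}"
    and xy: "x \<in> {of_int k..of_int k + 1}" "y \<in> {of_int k..of_int k + 1}"
  shows "d (S (boundary_path x)) (S (boundary_path y)) = \<bar>x - y\<bar>"
proof -
  have vertical: "d (S (i, r)) (S (i, s)) = \<bar>s - r\<bar>"
    and horizontal: "d (S (r, i)) (S (s, i)) = \<bar>s - r\<bar>"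
    if "i \<in> {0, 1}" "r \<in> {0..1}" "s \<in> {0..1}" for i r s
    using sms that unfolding square_metric_space_def by blast+
  from k consider "k = 0" | "k = 1" | "k = 2" | "k = 3" by force
  then show ?thesis
  proof cases
    case 1 with xy show ?thesis by (simp add: boundary_path_sides horizontal)
  next
    case 2 with xy show ?thesis by (simp add: boundary_path_sides vertical)
  next
    case 3 with xy show ?thesis by (simp add: boundary_path_sides horizontal)
  next
    case 4 with xy show ?thesis by (simp add: boundary_path_sides vertical)
  qed
qed

lemma square_metric_space_dist_boundary_path_le:
  assumes sms: "square_metric_space X d S" and ab: "a \<in> {0..4}" "b \<in> {0..4}"
  shows "d (S (boundary_path a)) (S (boundary_path b)) \<le> \<bar>a - b\<bar>"
proof -
  have ms: "Metric_space X d" and SM0: "S ` M0 \<subseteq> X"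
    using sms unfolding square_metric_space_def by auto
  from SM0 boundary_path_in_M0 have into: "(S \<circ> boundary_path) ` {0..4} \<subseteq> X"
    by (auto simp: image_subset_iff)
  have "d ((S \<circ> boundary_path) x) ((S \<circ> boundary_path) y) \<le> \<bar>x - y\<bar>"
    if "x \<in> {0..4}" "y \<in> {0..4}" "x \<in> {of_int k..of_int k + 1}" "y \<in> {of_int k..of_int k + 1}"
    for k :: int and x y
  proof (cases "x = y")
    case True
    have "S (boundary_path x) \<in> X" using into that(1) by auto
    with True show ?thesis
      using Metric_space.zero[OF ms, of "S (boundary_path x)" "S (boundary_path x)"] by simp
  next
    case False
    with that have "k \<in> {0..3}" by auto
    then show ?thesis
      using square_metric_space_dist_along_side[OF sms _ that(3,4)] by simp
  qed
  from Metric_space_dist_le_from_unit_intervals[OF ms into this ab] show ?thesis by simp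
qed

lemma square_metric_space_dist_le_sq_path_dist:
  assumes sms: "square_metric_space X d S" and pq: "p \<in> M0" "q \<in> M0"
  shows "d (S p) (S q) \<le> sq_path_dist p q"
proof -
  obtain a b where ab: "a \<in> {0..<4}" "b \<in> {0..<4}" "p = boundary_path a" "q = boundary_path b"
    using pq unfolding M0_eq_image_boundary_path by blast
  have ms: "Metric_space X d" and SM0: "S ` M0 \<subseteq> X"
    using sms unfolding square_metric_space_def by auto
  let ?c = "boundary_path 0"
  have "?c \<in> M0" by (simp add: boundary_path_in_M0)
  then have "d (S p) (S q) \<le> d (S p) (S ?c) + d (S ?c) (S q)"
    using Metric_space.triangle[OF ms] SM0 pq by blast
  moreover have "d (S p) (S ?c) \<le> \<bar>a - 0\<bar>" "d (S ?c) (S q) \<le> \<bar>0 - b\<bar>"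
    using square_metric_space_dist_boundary_path_le[OF sms, of a 0]
      square_metric_space_dist_boundary_path_le[OF sms, of 0 b] ab by auto
  moreover have "d (S p) (S ?c) \<le> \<bar>a - 4\<bar>" "d (S ?c) (S q) \<le> \<bar>4 - b\<bar>"
    using square_metric_space_dist_boundary_path_le[OF sms, of a 4]
      square_metric_space_dist_boundary_path_le[OF sms, of 4 b] ab boundary_path_4_eq_0 by auto
  moreover have "d (S p) (S q) \<le> \<bar>a - b\<bar>"
    using square_metric_space_dist_boundary_path_le[OF sms] ab by auto
  ultimately show ?thesis
    using ab by (simp add: sq_path_dist_boundary_path circle_dist_def)
qed

theorem mainTheorem18:
  shows "square_metric_space M0 sq_path_dist id \<and>
    (\<forall>(X :: 'a set) dX SX. square_metric_space X dX SX \<longrightarrow>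
       (\<exists>f. squams_morphism M0 sq_path_dist id X dX SX f \<and>
          (\<forall>g. squams_morphism M0 sq_path_dist id X dX SX g \<longrightarrow> (\<forall>x\<in>M0. g x = f x))))"
proof (intro conjI allI impI)
  show "square_metric_space M0 sq_path_dist id" by (rule square_metric_space_M0)
next
  fix X :: "'a set" and dX SX assume sms: "square_metric_space X dX SX"
  show "\<exists>f. squams_morphism M0 sq_path_dist id X dX SX f \<and>
          (\<forall>g. squams_morphism M0 sq_path_dist id X dX SX g \<longrightarrow> (\<forall>x\<in>M0. g x = f x))"
  proof (intro exI conjI allI impI ballI)
    show "squams_morphism M0 sq_path_dist id X dX SX SX"
      using sms square_metric_space_dist_le_sq_path_dist[OF sms]
      unfolding squams_morphism_def square_metric_space_def by auto
  next
    fix g x assume "squams_morphism M0 sq_path_dist id X dX SX g" "x \<in> M0"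
    then show "g x = SX x" unfolding squams_morphism_def by auto
  qed
qed

end
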